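(* Let $q\ge2$ and let $U_C$ be the operator on $\mathbb{C}^q\otimes\mathbb{C}^q$ with matrix elements $$\langle k\alpha|U_C|j\beta\rangle=\frac1q\exp\!\Bigl(-\frac{2\pi i}{q}\bigl[k\alpha+2j\beta-(k\beta+j\alpha)\bigr]\Bigr),\qquad k,\alpha,j,\beta\in\{0,\dots,q-1\}.$$ Then $U_C$ is unitary and dual-unitary for every $q$. If $q$ is odd, $U_C$ is 2-unitary, so $e_p(U_C)=1$ and all nontrivial eigenvalues of $\mathcal{M}_\pm^{U_C}$ vanish. If $q$ is even, $U_C$ is not 2-unitary and $e_p(U_C)=\frac{q^2-2}{q^2-1}$.
   Context: Product basis $|i\alpha\rangle$ of $\mathbb{C}^q\otimes\mathbb{C}^q$. Realignment $\langle\beta\alpha|X^{R_1}|ji\rangle=\langle i\alpha|X|j\beta\rangle$, partial transpose $\langle i\beta|X^{T_2}|j\alpha\rangle=\langle i\alpha|X|j\beta\rangle$. A unitary $U$ is dual-unitary if $U^{R_1}$ is unitary and 2-unitary if both $U^{R_1}$ and $U^{T_2}$ are unitary. $S$ is the swap. $E(U)=1-q^{-4}\operatorname{tr}[(U^{R_1}U^{R_1\dagger})^2]$, $E(S)=1-1/q^2$, $e_p(U)=\frac{E(U)+E(US)-E(S)}{E(S)}$. $\mathcal{M}_+^U(a)=\frac1q\operatorname{tr}_1[U^\dagger(a\otimes I)U]$, $\mathcal{M}_-^U(a)=\frac1q\operatorname{tr}_2[U^\dagger(I\otimes a)U]$ on $q\times q$ matrices; their nontrivial eigenvalues are the eigenvalues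 of their restrictions to traceless matrices. *)

theory Defs
  imports "Jordan_Normal_Form.Schur_Decomposition"
begin

text \<open>Operators on C^q (x) C^q are complex (q*q) x (q*q) matrices; the product basis
  vector |i alpha> (i, alpha < q) corresponds to the index i*q + alpha.\<close>

definition mtrace :: "complex mat \<Rightarrow> complex" where
  "mtrace A = (\<Sum>i<dim_row A. A $$ (i, i))"

definition unitary_mat :: "nat \<Rightarrow> complex mat \<Rightarrow> bool" where
  "unitary_mat n U \<longleftrightarrow> U \<in> carrier_mat n n \<and> mat_adjoint U * U = 1\<^sub>m n \<and> U * mat_adjoint U = 1\<^sub>m n"

text \<open>Realignment: <beta alpha| X^R | j i> = <i alpha| X | j beta>.\<close>
definition realign :: "nat \<Rightarrow> complex mat \<Rightarrow> complex mat" where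
  "realign q X = mat (q*q) (q*q)
     (\<lambda>(r, c). X $$ ((c mod q) * q + r mod q, (c div q) * q + r div q))"

text \<open>Partial transpose: <i beta| X^T2 | j alpha> = <i alpha| X | j beta>.\<close>
definition ptrans :: "nat \<Rightarrow> complex mat \<Rightarrow> complex mat" where
  "ptrans q X = mat (q*q) (q*q)
     (\<lambda>(r, c). X $$ ((r div q) * q + c mod q, (c div q) * q + r mod q))"

definition dual_unitary :: "nat \<Rightarrow> complex mat \<Rightarrow> bool" where
  "dual_unitary q U \<longleftrightarrow> unitary_mat (q*q) U \<and> unitary_mat (q*q) (realign q U)"

definition two_unitary :: "nat \<Rightarrow> complex mat \<Rightarrow> bool" where
  "two_unitary q U \<longleftrightarrow> unitary_mat (q*q) U \<and> unitary_mat (q*q) (realign q U)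
                        \<and> unitary_mat (q*q) (ptrans q U)"

text \<open>Swap: S |i alpha> = |alpha i>.\<close>
definition swap :: "nat \<Rightarrow> complex mat" where
  "swap q = mat (q*q) (q*q) (\<lambda>(r, c). if c = (r mod q) * q + r div q then 1 else 0)"

definition ent_power :: "nat \<Rightarrow> complex mat \<Rightarrow> complex" where
  "ent_power q U = (let R = realign q U in
      1 - mtrace ((R * mat_adjoint R) * (R * mat_adjoint R)) / (of_nat q) ^ 4)"

definition ent_power_swap :: "nat \<Rightarrow> complex" where
  "ent_power_swap q = 1 - 1 / (of_nat q) ^ 2"

definition ep :: "nat \<Rightarrow> complex mat \<Rightarrow> complex" where
  "ep q U = (ent_power q U + ent_power q (U * swap q) - ent_power_swap q) / ent_power_swap q"

text \<open>a (x) I and I (x) a.\<close>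
definition kron_left :: "nat \<Rightarrow> complex mat \<Rightarrow> complex mat" where
  "kron_left q a = mat (q*q) (q*q)
     (\<lambda>(r, c). if r mod q = c mod q then a $$ (r div q, c div q) else 0)"

definition kron_right :: "nat \<Rightarrow> complex mat \<Rightarrow> complex mat" where
  "kron_right q a = mat (q*q) (q*q)
     (\<lambda>(r, c). if r div q = c div q then a $$ (r mod q, c mod q) else 0)"

definition ptrace1 :: "nat \<Rightarrow> complex mat \<Rightarrow> complex mat" where
  "ptrace1 q X = mat q q (\<lambda>(a, b). \<Sum>i<q. X $$ (i * q + a, i * q + b))"

definition ptrace2 :: "nat \<Rightarrow> complex mat \<Rightarrow> complex mat" where
  "ptrace2 q X = mat q q (\<lambda>(i, j). \<Sum>a<q. X $$ (i * q + a, j * q + a))"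

definition Mplus :: "nat \<Rightarrow> complex mat \<Rightarrow> complex mat \<Rightarrow> complex mat" where
  "Mplus q U a = (1 / of_nat q) \<cdot>\<^sub>m ptrace1 q (mat_adjoint U * kron_left q a * U)"

definition Mminus :: "nat \<Rightarrow> complex mat \<Rightarrow> complex mat \<Rightarrow> complex mat" where
  "Mminus q U a = (1 / of_nat q) \<cdot>\<^sub>m ptrace2 q (mat_adjoint U * kron_right q a * U)"

definition nontrivial_eigenvalue ::
  "nat \<Rightarrow> (complex mat \<Rightarrow> complex mat) \<Rightarrow> complex \<Rightarrow> bool" where
  "nontrivial_eigenvalue q M l \<longleftrightarrow>
     (\<exists>a \<in> carrier_mat q q. a \<noteq> 0\<^sub>m q q \<and> mtrace a = 0 \<and> M a = l \<cdot>\<^sub>m a)"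

definition UC :: "nat \<Rightarrow> complex mat" where
  "UC q = mat (q*q) (q*q) (\<lambda>(r, c).
     let k = int (r div q); \<alpha> = int (r mod q); j = int (c div q); \<beta> = int (c mod q) in
     (1 / of_nat q) * exp (- (2 * of_real pi * \<i> / of_nat q)
                          * of_int (k * \<alpha> + 2 * j * \<beta> - (k * \<beta> + j * \<alpha>))))"

end

theory Submission
  imports Defs
begin

text \<open>Write \<open>\<omega> = exp (-2\<pi>i/q)\<close>. Every matrix that occurs -- \<open>U\<^sub>C\<close>, its realignment, its partial
  transpose and the realignment of \<open>U\<^sub>C S\<close> -- has entries \<open>\<omega>\<^bsup>\<psi>(k,a) + \<phi>(j,b) + k L(j,b) + a M(j,b)\<^esup> / q\<close>
  at row \<open>|k a>\<close> and column \<open>|j b>\<close>. In the Gram matrix \<open>A\<^sup>\<dagger> A\<close> the row phase \<open>\<psi>\<close> cancels and the sums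
  over \<open>k\<close> and \<open>a\<close> are character sums, so an entry is a phase times the indicator that \<open>q\<close>
  divides both \<open>L(j',b') - L(j,b)\<close> and \<open>M(j',b') - M(j,b)\<close>. Unitarity thus amounts to these
  linear forms separating columns modulo \<open>q\<close>; for the partial transpose one of them is \<open>2j\<close>,
  which separates exactly when \<open>q\<close> is odd. The same Gram formula shows that
  \<open>tr((R R\<^sup>\<dagger>)\<^sup>2)\<close> for \<open>R = (U\<^sub>C S)\<^sup>R\<close> is \<open>q\<close> times the number of pairs with \<open>2j \<equiv> 2j' (mod q)\<close>,
  i.e. \<open>q\<^sup>2\<close> or \<open>2q\<^sup>2\<close>, which gives \<open>e\<^sub>p\<close>. Finally, when the partial transpose of \<open>U\<close> is unitary,
  both partial-trace maps send \<open>a\<close> to \<open>tr(a) I / q\<close> and so vanish on traceless matrices.\<close>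

section \<open>Powers of a root of unity\<close>

definition omega :: "nat \<Rightarrow> int \<Rightarrow> complex" where
  "omega q n = exp (- (2 * of_real pi * \<i> / of_nat q) * of_int n)"

lemma omega_cis: "omega q n = cis (- 2 * pi * of_int n / q)"
  unfolding omega_def cis_conv_exp by (simp add: field_simps)

lemma omega_add: "omega q (m + n) = omega q m * omega q n"
  unfolding omega_cis cis_mult by (cases "q = 0") (simp_all add: field_simps)

lemma omega_0 [simp]: "omega q 0 = 1"
  by (simp add: omega_def)

lemma cnj_omega: "cnj (omega q n) = omega q (- n)"
  unfolding omega_cis cis_cnj by simp

lemma cnj_omega_mult: "cnj (omega q m) * omega q n = omega q (n - m)"
  by (simp add: cnj_omega flip: omega_add)

lemma omega_power: "omega q n ^ k = omega q (n * int k)"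
  by (induction k) (simp_all add: omega_add algebra_simps)

lemma omega_eq_1_iff:
  assumes "q > 0"
  shows "omega q n = 1 \<longleftrightarrow> int q dvd n"
proof
  assume "omega q n = 1"
  then have "cos (- 2 * pi * of_int n / q) = 1"
    unfolding omega_cis by (simp add: complex_eq_iff)
  then obtain m :: int where "- 2 * pi * of_int n / q = of_int m * 2 * pi"
    using cos_one_2pi_int by blast
  with assms have "pi * real_of_int (n + m * int q) = 0"
    by (simp add: field_simps)
  then have "n + m * int q = 0"
    by (metis mult_eq_0_iff of_int_eq_0_iff pi_neq_zero)
  then have "n = int q * (- m)"
    by (simp add: algebra_simps eq_neg_iff_add_eq_0)
  then show "int q dvd n" ..
next
  assume "int q dvd n"
  then obtain m where "n = int q * m" ..
  with assms have "omega q n = cis (2 * pi * of_int (- m))"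
    unfolding omega_cis by (simp add: field_simps)
  also have "\<dots> = 1"
    by (rule cis_multiple_2pi) simp
  finally show "omega q n = 1" .
qed

lemma sum_omega:
  assumes "q > 0"
  shows "(\<Sum>x<q. omega q (int x * n)) = (if int q dvd n then of_nat q else 0)"
proof (cases "int q dvd n")
  case True
  then have "omega q (int x * n) = 1" for x
    using assms by (simp add: omega_eq_1_iff)
  with True show ?thesis
    by simp
next
  case False
  then have "omega q n \<noteq> 1"
    using assms by (simp add: omega_eq_1_iff)
  then have "(\<Sum>x<q. omega q n ^ x) = (omega q n ^ q - 1) / (omega q n - 1)"
    by (rule geometric_sum)
  moreover have "omega q n ^ q = 1"
    using assms by (simp add: omega_power omega_eq_1_iff)
  ultimately show ?thesis
    using False by (simp add: omega_power mult.commute)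
qed

lemma int_dvd_diff_iff_eq:
  assumes "b < q" "b' < q"
  shows "int q dvd (int b - int b') \<longleftrightarrow> b = b'"
proof
  assume "int q dvd (int b - int b')"
  then have "int b mod int q = int b' mod int q"
    by (simp add: mod_eq_dvd_iff)
  with assms show "b = b'"
    by simp
qed simp

lemma odd_int_dvd_double_iff:
  assumes "odd q"
  shows "int q dvd (2 * x) \<longleftrightarrow> int q dvd x"
proof -
  have "coprime (int q) 2"
    using assms by simp
  then show ?thesis
    by (simp add: coprime_dvd_mult_right_iff)
qed

section \<open>Matrix entries and traces\<close>

lemma sum_lessThan_mult_split:
  fixes f :: "nat \<Rightarrow> 'a::comm_monoid_add"
  shows "(\<Sum>r<m * q. f r) = (\<Sum>k<m. \<Sum>a<q. f (k * q + a))"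
proof -
  have "(\<Sum>r<m * q. f r) = (\<Sum>k<m. sum f {k * q..<k * q + q})"
    using sum.nat_group[of f q m] by simp
  also have "\<dots> = (\<Sum>k<m. \<Sum>a<q. f (k * q + a))"
  proof (rule sum.cong [OF refl])
    fix k
    show "sum f {k * q..<k * q + q} = (\<Sum>a<q. f (k * q + a))"
      using sum.shift_bounds_nat_ivl[of f 0 "k * q" q]
      by (simp add: atLeast0LessThan add.commute)
  qed
  finally show ?thesis .
qed

lemma sum_swap_inward2:
  "(\<Sum>i\<in>I. \<Sum>j\<in>J. \<Sum>k\<in>K. f i j k) = (\<Sum>j\<in>J. \<Sum>k\<in>K. \<Sum>i\<in>I. f i j k)"
  by (subst sum.swap) (rule sum.cong [OF refl], rule sum.swap)

lemma sum_swap_inward3: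
  "(\<Sum>i\<in>I. \<Sum>j\<in>J. \<Sum>k\<in>K. \<Sum>l\<in>L. f i j k l) = (\<Sum>j\<in>J. \<Sum>k\<in>K. \<Sum>l\<in>L. \<Sum>i\<in>I. f i j k l)"
  by (subst sum.swap) (rule sum.cong [OF refl], rule sum_swap_inward2)

lemma pair_index_div [simp]: "a < (q::nat) \<Longrightarrow> (k * q + a) div q = k"
  by simp

lemma pair_index_mod [simp]: "a < (q::nat) \<Longrightarrow> (k * q + a) mod q = a"
  by simp

lemma pair_index_less [simp]:
  assumes "k < (q::nat)" "a < q"
  shows "k * q + a < q * q"
proof -
  from assms(2) have "k * q + a < Suc k * q"
    by simp
  also have "\<dots> \<le> q * q"
    using assms(1) by (intro mult_le_mono1) simp
  finally show ?thesis .
qed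

lemma pair_index_eq_iff [simp]:
  "a < (q::nat) \<Longrightarrow> b < q \<Longrightarrow> k * q + a = j * q + b \<longleftrightarrow> k = j \<and> a = b"
  by (metis pair_index_div pair_index_mod)

lemma eq_mat_pair_indexI:
  assumes "A \<in> carrier_mat (q * q) (q * q)" "B \<in> carrier_mat (q * q) (q * q)"
    and "\<And>j b j' b'. j < q \<Longrightarrow> b < q \<Longrightarrow> j' < q \<Longrightarrow> b' < q \<Longrightarrow>
      A $$ (j * q + b, j' * q + b') = B $$ (j * q + b, j' * q + b')"
  shows "A = B"
proof (rule eq_matI)
  fix r c
  assume "r < dim_row B" "c < dim_col B"
  with assms(2) have "r < q * q" "c < q * q"
    by auto
  moreover from this have "q > 0"
    by (cases q) auto
  ultimately have "r div q < q" "r mod q < q" "c div q < q" "c mod q < q"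
    by (auto simp: less_mult_imp_div_less)
  then show "A $$ (r, c) = B $$ (r, c)"
    using assms(3) by (metis div_mult_mod_eq)
qed (use assms in auto)

lemma dim_row_mat_adjoint [simp]: "dim_row (mat_adjoint A) = dim_col A"
  and dim_col_mat_adjoint [simp]: "dim_col (mat_adjoint A) = dim_row A"
  and index_mat_adjoint [simp]:
    "i < dim_col A \<Longrightarrow> j < dim_row A \<Longrightarrow> mat_adjoint A $$ (i, j) = cnj (A $$ (j, i))"
  by (simp_all add: mat_adjoint_def mat_of_rows_def)

lemma mat_adjoint_carrier:
  "(A :: complex mat) \<in> carrier_mat n m \<Longrightarrow> mat_adjoint A \<in> carrier_mat m n"
  unfolding carrier_mat_def by simp

lemma index_mult_mat_sum:
  assumes "A \<in> carrier_mat n k" "B \<in> carrier_mat k m" "r < n" "c < m"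
  shows "(A * B) $$ (r, c) = (\<Sum>s<k. A $$ (r, s) * B $$ (s, c))"
  using assms by (auto simp: scalar_prod_def atLeast0LessThan)

lemma index_mult_mat_pair_split:
  assumes "dim_col A = q * q" "dim_row B = q * q" "r < dim_row A" "c < dim_col B"
  shows "(A * B) $$ (r, c) = (\<Sum>k<q. \<Sum>a<q. A $$ (r, k * q + a) * B $$ (k * q + a, c))"
proof -
  have "(A * B) $$ (r, c) = (\<Sum>s<q * q. A $$ (r, s) * B $$ (s, c))"
    using assms by (intro index_mult_mat_sum[of _ "dim_row A"]) auto
  then show ?thesis
    unfolding sum_lessThan_mult_split .
qed

lemma index_adjoint_mult_pair_split:
  assumes "dim_row A = q * q" "c < dim_col A" "c' < dim_col A"
  shows "(mat_adjoint A * A) $$ (c, c') =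
    (\<Sum>k<q. \<Sum>a<q. cnj (A $$ (k * q + a, c)) * A $$ (k * q + a, c'))"
proof -
  have "(mat_adjoint A * A) $$ (c, c') =
    (\<Sum>k<q. \<Sum>a<q. mat_adjoint A $$ (c, k * q + a) * A $$ (k * q + a, c'))"
    using assms by (intro index_mult_mat_pair_split) simp_all
  also have "\<dots> = (\<Sum>k<q. \<Sum>a<q. cnj (A $$ (k * q + a, c)) * A $$ (k * q + a, c'))"
    using assms by (intro sum.cong refl) simp
  finally show ?thesis .
qed

lemma index_mult_adjoint_pair_split:
  assumes "dim_col A = q * q" "r < dim_row A" "r' < dim_row A"
  shows "(A * mat_adjoint A) $$ (r, r') =
    (\<Sum>k<q. \<Sum>a<q. A $$ (r, k * q + a) * cnj (A $$ (r', k * q + a)))"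
proof -
  have "(A * mat_adjoint A) $$ (r, r') =
    (\<Sum>k<q. \<Sum>a<q. A $$ (r, k * q + a) * mat_adjoint A $$ (k * q + a, r'))"
    using assms by (intro index_mult_mat_pair_split) simp_all
  also have "\<dots> = (\<Sum>k<q. \<Sum>a<q. A $$ (r, k * q + a) * cnj (A $$ (r', k * q + a)))"
    using assms by (intro sum.cong refl) simp
  finally show ?thesis .
qed

lemma unitary_matI_adjoint_mult:
  assumes "A \<in> carrier_mat n n" "mat_adjoint A * A = 1\<^sub>m n"
  shows "unitary_mat n A"
  using assms mat_mult_left_right_inverse[OF mat_adjoint_carrier assms]
  unfolding unitary_mat_def by blast

lemma mtrace_mult_commute:
  assumes "A \<in> carrier_mat n m" "B \<in> carrier_mat m n"
  shows "mtrace (A * B) = mtrace (B * A)"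
proof -
  have "mtrace (A * B) = (\<Sum>i<n. (A * B) $$ (i, i))"
    unfolding mtrace_def using assms by simp
  also have "\<dots> = (\<Sum>i<n. \<Sum>s<m. A $$ (i, s) * B $$ (s, i))"
    using assms by (intro sum.cong refl index_mult_mat_sum) auto
  also have "\<dots> = (\<Sum>s<m. \<Sum>i<n. B $$ (s, i) * A $$ (i, s))"
    by (subst sum.swap) (simp add: mult.commute)
  also have "\<dots> = (\<Sum>s<m. (B * A) $$ (s, s))"
    using assms by (intro sum.cong refl index_mult_mat_sum[symmetric]) auto
  also have "\<dots> = mtrace (B * A)"
    unfolding mtrace_def using assms by simp
  finally show ?thesis .
qed

lemma mtrace_square_mult_adjoint:
  assumes "R \<in> carrier_mat n n"
  shows "mtrace ((R * mat_adjoint R) * (R * mat_adjoint R))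
    = mtrace ((mat_adjoint R * R) * (mat_adjoint R * R))"
proof -
  have adj: "mat_adjoint R \<in> carrier_mat n n"
    using assms by (rule mat_adjoint_carrier)
  have "(R * mat_adjoint R) * (R * mat_adjoint R) = R * (mat_adjoint R * R * mat_adjoint R)"
    using assms adj by (simp add: assoc_mult_mat[of _ n n _ n _ n])
  moreover have "(mat_adjoint R * R * mat_adjoint R) * R = (mat_adjoint R * R) * (mat_adjoint R * R)"
    using assms adj by (simp add: assoc_mult_mat[of _ n n _ n _ n])
  ultimately show ?thesis
    using assms adj by (metis mtrace_mult_commute mult_carrier_mat)
qed

lemma mtrace_one_mat: "mtrace (1\<^sub>m n) = of_nat n"
  by (simp add: mtrace_def)

section \<open>Gram matrices of phase matrices\<close>

lemma adjoint_mult_phase_matrix: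
  fixes \<psi> \<phi> L M :: "nat \<Rightarrow> nat \<Rightarrow> int"
  assumes "q > 0" "A \<in> carrier_mat (q * q) (q * q)"
    and entry: "\<And>k a j b. k < q \<Longrightarrow> a < q \<Longrightarrow> j < q \<Longrightarrow> b < q \<Longrightarrow>
      A $$ (k * q + a, j * q + b) = omega q (\<psi> k a + \<phi> j b + int k * L j b + int a * M j b) / of_nat q"
    and "j < q" "b < q" "j' < q" "b' < q"
  shows "(mat_adjoint A * A) $$ (j * q + b, j' * q + b') =
    (if int q dvd (L j' b' - L j b) \<and> int q dvd (M j' b' - M j b)
     then omega q (\<phi> j' b' - \<phi> j b) else 0)"
proof -
  define dL where "dL = L j' b' - L j b"
  define dM where "dM = M j' b' - M j b"
  have entry_product: "cnj (A $$ (k * q + a, j * q + b)) * A $$ (k * q + a, j' * q + b') =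
      omega q (\<phi> j' b' - \<phi> j b) * (omega q (int k * dL) * omega q (int a * dM)) / of_nat q ^ 2"
    if "k < q" "a < q" for k a
  proof -
    let ?u = "\<psi> k a + \<phi> j b + int k * L j b + int a * M j b"
    let ?v = "\<psi> k a + \<phi> j' b' + int k * L j' b' + int a * M j' b'"
    have "cnj (A $$ (k * q + a, j * q + b)) * A $$ (k * q + a, j' * q + b') = omega q (?v - ?u) / of_nat q ^ 2"
      using that assms(4-7) by (simp add: entry cnj_omega_mult power2_eq_square)
    also have "?v - ?u = (\<phi> j' b' - \<phi> j b) + int k * dL + int a * dM"
      unfolding dL_def dM_def by (simp add: algebra_simps)
    finally show ?thesis
      by (simp add: omega_add mult.assoc)
  qed
  have "(mat_adjoint A * A) $$ (j * q + b, j' * q + b') =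
      (\<Sum>k<q. \<Sum>a<q. cnj (A $$ (k * q + a, j * q + b)) * A $$ (k * q + a, j' * q + b'))"
    using assms by (intro index_adjoint_mult_pair_split) auto
  also have "\<dots> = omega q (\<phi> j' b' - \<phi> j b)
      * (\<Sum>k<q. \<Sum>a<q. omega q (int k * dL) * omega q (int a * dM)) / of_nat q ^ 2"
    by (simp add: entry_product sum_distrib_left sum_divide_distrib)
  also have "\<dots> = omega q (\<phi> j' b' - \<phi> j b)
      * ((\<Sum>k<q. omega q (int k * dL)) * (\<Sum>a<q. omega q (int a * dM))) / of_nat q ^ 2"
    by (simp only: sum_product)
  also have "\<dots> = (if int q dvd dL \<and> int q dvd dM then omega q (\<phi> j' b' - \<phi> j b) else 0)"
    using assms(1) by (simp add: sum_omega power2_eq_square)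
  finally show ?thesis
    unfolding dL_def dM_def .
qed

lemma unitary_phase_matrix:
  fixes \<psi> \<phi> L M :: "nat \<Rightarrow> nat \<Rightarrow> int"
  assumes "q > 0" "A \<in> carrier_mat (q * q) (q * q)"
    and "\<And>k a j b. k < q \<Longrightarrow> a < q \<Longrightarrow> j < q \<Longrightarrow> b < q \<Longrightarrow>
      A $$ (k * q + a, j * q + b) = omega q (\<psi> k a + \<phi> j b + int k * L j b + int a * M j b) / of_nat q"
    and separating: "\<And>j b j' b'. j < q \<Longrightarrow> b < q \<Longrightarrow> j' < q \<Longrightarrow> b' < q \<Longrightarrow>
      int q dvd (L j' b' - L j b) \<Longrightarrow> int q dvd (M j' b' - M j b) \<Longrightarrow> j = j' \<and> b = b'"
  shows "unitary_mat (q * q) A"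
proof (rule unitary_matI_adjoint_mult)
  show "mat_adjoint A * A = 1\<^sub>m (q * q)"
  proof (rule eq_mat_pair_indexI)
    fix j b j' b'
    assume "j < q" "b < q" "j' < q" "b' < q"
    then show "(mat_adjoint A * A) $$ (j * q + b, j' * q + b') = 1\<^sub>m (q * q) $$ (j * q + b, j' * q + b')"
      using separating[of j b j' b'] by (auto simp: adjoint_mult_phase_matrix[OF assms(1-3)])
  qed (use assms(2) in auto)
qed (fact assms(2))

section \<open>Unitarity of the gate and of its reshufflings\<close>

lemma UC_carrier: "UC q \<in> carrier_mat (q * q) (q * q)"
  by (simp add: UC_def)

lemma realign_carrier: "realign q X \<in> carrier_mat (q * q) (q * q)"
  by (simp add: realign_def)

lemma ptrans_carrier: "ptrans q X \<in> carrier_mat (q * q) (q * q)"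
  by (simp add: ptrans_def)

lemma swap_carrier: "swap q \<in> carrier_mat (q * q) (q * q)"
  by (simp add: swap_def)

lemma UC_index:
  "k < q \<Longrightarrow> a < q \<Longrightarrow> j < q \<Longrightarrow> b < q \<Longrightarrow> UC q $$ (k * q + a, j * q + b) =
    omega q (int k * int a + 2 * int j * int b - (int k * int b + int j * int a)) / of_nat q"
  by (simp add: UC_def omega_def Let_def)

lemma realign_index:
  "i < q \<Longrightarrow> a < q \<Longrightarrow> j < q \<Longrightarrow> b < q \<Longrightarrow>
    realign q X $$ (b * q + a, j * q + i) = X $$ (i * q + a, j * q + b)"
  by (simp add: realign_def)

lemma ptrans_index:
  "i < q \<Longrightarrow> a < q \<Longrightarrow> j < q \<Longrightarrow> b < q \<Longrightarrow>
    ptrans q X $$ (i * q + b, j * q + a) = X $$ (i * q + a, j * q + b)"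
  by (simp add: ptrans_def)

lemma mult_swap_index:
  assumes "dim_col A = q * q" "r < dim_row A" "j < q" "b < q"
  shows "(A * swap q) $$ (r, j * q + b) = A $$ (r, b * q + j)"
proof -
  have swap_entry: "swap q $$ (s, j * q + b) = (if s = b * q + j then 1 else 0)" if "s < q * q" for s
  proof -
    from that have "q > 0"
      by (cases q) auto
    with that have "s div q < q" "s mod q < q"
      by (auto simp: less_mult_imp_div_less)
    with that assms(3,4) show ?thesis
      by (auto simp: swap_def)
  qed
  have "(A * swap q) $$ (r, j * q + b) = (\<Sum>s<q * q. A $$ (r, s) * swap q $$ (s, j * q + b))"
    using assms swap_carrier[of q] by (intro index_mult_mat_sum) auto
  also have "\<dots> = (\<Sum>s<q * q. A $$ (r, s) * (if s = b * q + j then 1 else 0))"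
    using swap_entry by (intro sum.cong refl) simp
  also have "\<dots> = (\<Sum>s<q * q. if s = b * q + j then A $$ (r, s) else 0)"
    by (intro sum.cong refl) simp
  also have "\<dots> = A $$ (r, b * q + j)"
    using assms(3,4) by simp
  finally show ?thesis .
qed

lemma unitary_UC:
  assumes "q > 0"
  shows "unitary_mat (q * q) (UC q)"
proof (rule unitary_phase_matrix[OF assms UC_carrier])
  show "UC q $$ (k * q + a, j * q + b) = omega q (int k * int a + 2 * int j * int b
      + int k * - int b + int a * - int j) / of_nat q"
    if "k < q" "a < q" "j < q" "b < q" for k a j b
    using that by (simp only: UC_index) (simp add: algebra_simps)
  show "j = j' \<and> b = b'"
    if "j < q" "b < q" "j' < q" "b' < q" "int q dvd (- int b' - - int b)" "int q dvd (- int j' - - int j)"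
    for j b j' b'
    using that int_dvd_diff_iff_eq[of b q b'] int_dvd_diff_iff_eq[of j q j'] by simp
qed

lemma unitary_realign_UC:
  assumes "q > 0"
  shows "unitary_mat (q * q) (realign q (UC q))"
proof (rule unitary_phase_matrix[OF assms realign_carrier])
  show "realign q (UC q) $$ (k * q + a, j * q + i) = omega q (0 + 0
      + int k * (2 * int j - int i) + int a * (int i - int j)) / of_nat q"
    if "k < q" "a < q" "j < q" "i < q" for k a j i
    using that by (simp only: realign_index UC_index) (simp add: algebra_simps)
  show "j = j' \<and> i = i'"
    if "j < q" "i < q" "j' < q" "i' < q"
      and "int q dvd ((2 * int j' - int i') - (2 * int j - int i))"
      and "int q dvd ((int i' - int j') - (int i - int j))"
    for j i j' i'
  proof -
    have "int q dvd ((2 * int j' - int i') - (2 * int j - int i)) + ((int i' - int j') - (int i - int j))"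
      using that(5,6) by (rule dvd_add)
    then have "j' = j"
      using that(1,3) int_dvd_diff_iff_eq[of j' q j] by (simp add: algebra_simps)
    with that show ?thesis
      using int_dvd_diff_iff_eq[of i' q i] by (simp add: algebra_simps)
  qed
qed

lemma ptrans_UC_index:
  "i < q \<Longrightarrow> b < q \<Longrightarrow> j < q \<Longrightarrow> a < q \<Longrightarrow> ptrans q (UC q) $$ (i * q + b, j * q + a) =
    omega q (- int i * int b + - int j * int a + int i * int a + int b * (2 * int j)) / of_nat q"
  by (simp only: ptrans_index UC_index) (simp add: algebra_simps)

lemma unitary_ptrans_UC:
  assumes "odd q"
  shows "unitary_mat (q * q) (ptrans q (UC q))"
proof (rule unitary_phase_matrix[OF _ ptrans_carrier ptrans_UC_index])
  show "q > 0"
    using assms by (cases q) auto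
  show "j = j' \<and> a = a'"
    if "j < q" "a < q" "j' < q" "a' < q"
      and "int q dvd (int a' - int a)" "int q dvd (2 * int j' - 2 * int j)"
    for j a j' a'
    using that int_dvd_diff_iff_eq[of a' q a] int_dvd_diff_iff_eq[of j' q j]
      odd_int_dvd_double_iff[OF assms, of "int j' - int j"]
    by (simp add: algebra_simps)
qed

lemma not_unitary_ptrans_UC:
  assumes "even q" "q > 0"
  shows "mat_adjoint (ptrans q (UC q)) * ptrans q (UC q) \<noteq> 1\<^sub>m (q * q)"
proof
  obtain m where m: "q = 2 * m"
    using assms(1) ..
  then have "m < q" "m \<noteq> 0"
    using assms(2) by auto
  assume "mat_adjoint (ptrans q (UC q)) * ptrans q (UC q) = 1\<^sub>m (q * q)"
  then have "(mat_adjoint (ptrans q (UC q)) * ptrans q (UC q)) $$ (0 * q + 0, m * q + 0) = 0"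
    using \<open>m < q\<close> \<open>m \<noteq> 0\<close> by simp
  moreover have "(mat_adjoint (ptrans q (UC q)) * ptrans q (UC q)) $$ (0 * q + 0, m * q + 0) = 1"
    using \<open>m < q\<close> m
    by (subst adjoint_mult_phase_matrix[OF assms(2) ptrans_carrier ptrans_UC_index]) simp_all
  ultimately show False
    by simp
qed

section \<open>Entangling power\<close>

lemma ent_power_unitary_realign:
  assumes "unitary_mat (q * q) (realign q U)"
  shows "ent_power q U = 1 - 1 / of_nat q ^ 2"
proof -
  have "realign q U * mat_adjoint (realign q U) = 1\<^sub>m (q * q)"
    using assms unfolding unitary_mat_def by blast
  then have "ent_power q U = 1 - of_nat q * of_nat q / of_nat q ^ 4"
    unfolding ent_power_def Let_def by (simp add: mtrace_one_mat)
  then show ?thesis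
    by (cases "q = 0") (simp_all add: power2_eq_square power4_eq_xxxx)
qed

lemma UC_swap_index:
  assumes "k < q" "a < q" "j < q" "b < q"
  shows "(UC q * swap q) $$ (k * q + a, j * q + b) = UC q $$ (k * q + a, b * q + j)"
  using assms UC_carrier[of q] by (intro mult_swap_index) auto

lemma realign_UC_swap_index:
  assumes "k < q" "a < q" "j < q" "i < q"
  shows "realign q (UC q * swap q) $$ (k * q + a, j * q + i) =
    omega q (- int k * int a + - int i * int j + int k * (2 * int j) + int a * int i) / of_nat q"
  using assms by (simp only: realign_index UC_swap_index UC_index) (simp add: algebra_simps)

lemma sum_double_congruent:
  assumes "b < q"
  shows "(\<Sum>k<q. if int q dvd (2 * int k - 2 * int b) then 1 else 0 :: complex) = (if odd q then 1 else 2)"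
proof (cases "odd q")
  case True
  have "int q dvd (2 * int k - 2 * int b) \<longleftrightarrow> k = b" if "k < q" for k
    using odd_int_dvd_double_iff[OF True, of "int k - int b"] int_dvd_diff_iff_eq[OF that assms]
    by (simp add: algebra_simps)
  then have "(\<Sum>k<q. if int q dvd (2 * int k - 2 * int b) then 1 else 0 :: complex)
      = (\<Sum>k<q. if k = b then 1 else 0)"
    by (intro sum.cong refl) simp
  with True assms show ?thesis
    by simp
next
  case False
  then obtain m where q: "q = 2 * m"
    by auto
  with assms have "m > 0"
    by simp
  have "int q dvd (2 * int (s * m + t) - 2 * int b) \<longleftrightarrow> t = b mod m" if "t < m" for s t
  proof -
    have "2 * int (s * m + t) - 2 * int b = 2 * (int t - int b + int s * int m)"
      by (simp add: algebra_simps)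
    then have "int q dvd (2 * int (s * m + t) - 2 * int b) \<longleftrightarrow> int (2 * m) dvd 2 * (int t - int b + int s * int m)"
      by (simp only: q)
    also have "\<dots> \<longleftrightarrow> int m dvd (int t - int b + int s * int m)"
      unfolding of_nat_mult of_nat_numeral dvd_mult_cancel_left by simp
    also have "\<dots> \<longleftrightarrow> int t mod int m = int b mod int m"
      by (simp add: mod_eq_dvd_iff)
    also have "\<dots> \<longleftrightarrow> t = b mod m"
      using that by (auto simp flip: of_nat_mod)
    finally show ?thesis .
  qed
  then have "(\<Sum>k<q. if int q dvd (2 * int k - 2 * int b) then 1 else 0 :: complex)
      = (\<Sum>s<2::nat. \<Sum>t<m. if t = b mod m then 1 else 0)"
    unfolding q sum_lessThan_mult_split by (intro sum.cong refl) simp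
  with False \<open>m > 0\<close> show ?thesis
    by simp
qed

lemma mtrace_gram_square_realign_UC_swap:
  assumes "q > 0"
  defines "G \<equiv> mat_adjoint (realign q (UC q * swap q)) * realign q (UC q * swap q)"
  shows "mtrace (G * G) = of_nat q * (\<Sum>j<q. \<Sum>j'<q. if int q dvd (2 * int j' - 2 * int j) then 1 else 0)"
proof -
  have G_carrier: "G \<in> carrier_mat (q * q) (q * q)"
    unfolding G_def by (rule mult_carrier_mat mat_adjoint_carrier realign_carrier)+
  have G_index: "G $$ (j * q + i, j' * q + i') =
      (if int q dvd (2 * int j' - 2 * int j) \<and> int q dvd (int i' - int i)
       then omega q (- int i' * int j' - - int i * int j) else 0)"
    if "j < q" "i < q" "j' < q" "i' < q" for j i j' i'
    unfolding G_def using that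
    by (simp add: adjoint_mult_phase_matrix[OF assms(1) realign_carrier realign_UC_swap_index])
  have G_product: "G $$ (j * q + i, j' * q + i') * G $$ (j' * q + i', j * q + i) =
      (if int q dvd (2 * int j' - 2 * int j) \<and> i' = i then 1 else 0)"
    if "j < q" "i < q" "j' < q" "i' < q" for j i j' i'
    using that G_index int_dvd_diff_iff_eq[of i' q i]
    by (auto simp: dvd_diff_commute[of "int q" "2 * int j"] dvd_diff_commute[of "int q" "int i"]
        simp flip: omega_add)
  have "mtrace (G * G) = (\<Sum>j<q. \<Sum>i<q. (G * G) $$ (j * q + i, j * q + i))"
    using G_carrier by (simp add: mtrace_def sum_lessThan_mult_split)
  also have "\<dots> = (\<Sum>j<q. \<Sum>i<q. \<Sum>j'<q. \<Sum>i'<q.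
      G $$ (j * q + i, j' * q + i') * G $$ (j' * q + i', j * q + i))"
    using G_carrier by (intro sum.cong refl index_mult_mat_pair_split) auto
  also have "\<dots> = (\<Sum>j<q. \<Sum>i<q. \<Sum>j'<q. if int q dvd (2 * int j' - 2 * int j) then 1 else 0)"
    by (intro sum.cong refl) (simp add: G_product)
  also have "\<dots> = of_nat q * (\<Sum>j<q. \<Sum>j'<q. if int q dvd (2 * int j' - 2 * int j) then 1 else 0)"
    by (simp add: sum_distrib_left)
  finally show ?thesis .
qed

lemma ent_power_UC_swap:
  assumes "q > 0"
  shows "ent_power q (UC q * swap q) = 1 - (if odd q then 1 else 2) / of_nat q ^ 2"
proof -
  let ?R = "realign q (UC q * swap q)"
  have "mtrace ((?R * mat_adjoint ?R) * (?R * mat_adjoint ?R))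
      = of_nat q * of_nat q * (if odd q then 1 else 2)"
    using assms by (simp add: mtrace_square_mult_adjoint[OF realign_carrier]
        mtrace_gram_square_realign_UC_swap sum_double_congruent)
  with assms show ?thesis
    unfolding ent_power_def Let_def by (simp add: power2_eq_square power4_eq_xxxx)
qed

section \<open>The partial-trace maps\<close>

lemma kron_left_carrier: "kron_left q a \<in> carrier_mat (q * q) (q * q)"
  by (simp add: kron_left_def)

lemma kron_right_carrier: "kron_right q a \<in> carrier_mat (q * q) (q * q)"
  by (simp add: kron_right_def)

lemma kron_left_index:
  "k < q \<Longrightarrow> x < q \<Longrightarrow> k' < q \<Longrightarrow> x' < q \<Longrightarrow>
    kron_left q a $$ (k * q + x, k' * q + x') = (if x = x' then a $$ (k, k') else 0)"
  by (simp add: kron_left_def)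

lemma kron_right_index:
  "k < q \<Longrightarrow> x < q \<Longrightarrow> k' < q \<Longrightarrow> x' < q \<Longrightarrow>
    kron_right q a $$ (k * q + x, k' * q + x') = (if k = k' then a $$ (x, x') else 0)"
  by (simp add: kron_right_def)

lemma index_adjoint_mult_kron_left:
  assumes "U \<in> carrier_mat (q * q) (q * q)" "r < q * q" "k' < q" "x < q"
  shows "(mat_adjoint U * kron_left q a) $$ (r, k' * q + x) = (\<Sum>k<q. cnj (U $$ (k * q + x, r)) * a $$ (k, k'))"
proof -
  have "(mat_adjoint U * kron_left q a) $$ (r, k' * q + x)
      = (\<Sum>k<q. \<Sum>y<q. mat_adjoint U $$ (r, k * q + y) * kron_left q a $$ (k * q + y, k' * q + x))"
    using assms kron_left_carrier[of q a] by (intro index_mult_mat_pair_split) auto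
  also have "\<dots> = (\<Sum>k<q. \<Sum>y<q. if y = x then cnj (U $$ (k * q + y, r)) * a $$ (k, k') else 0)"
    using assms by (intro sum.cong refl) (auto simp: kron_left_index)
  finally show ?thesis
    using assms(4) by simp
qed

lemma index_adjoint_mult_kron_right:
  assumes "U \<in> carrier_mat (q * q) (q * q)" "r < q * q" "k' < q" "x' < q"
  shows "(mat_adjoint U * kron_right q a) $$ (r, k' * q + x') = (\<Sum>x<q. cnj (U $$ (k' * q + x, r)) * a $$ (x, x'))"
proof -
  have "(mat_adjoint U * kron_right q a) $$ (r, k' * q + x')
      = (\<Sum>k<q. \<Sum>x<q. mat_adjoint U $$ (r, k * q + x) * kron_right q a $$ (k * q + x, k' * q + x'))"
    using assms kron_right_carrier[of q a] by (intro index_mult_mat_pair_split) auto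
  also have "\<dots> = (\<Sum>k<q. if k = k' then \<Sum>x<q. cnj (U $$ (k * q + x, r)) * a $$ (x, x') else 0)"
    using assms by (intro sum.cong refl) (auto simp: kron_right_index)
  finally show ?thesis
    using assms(3) by simp
qed

lemma index_conj_kron_left:
  assumes "U \<in> carrier_mat (q * q) (q * q)" "r < q * q" "s < q * q"
  shows "(mat_adjoint U * kron_left q a * U) $$ (r, s) = (\<Sum>k'<q. \<Sum>\<alpha><q. \<Sum>k<q.
    cnj (U $$ (k * q + \<alpha>, r)) * a $$ (k, k') * U $$ (k' * q + \<alpha>, s))"
  using assms kron_left_carrier[of q a]
  by (subst index_mult_mat_pair_split[of _ q])
    (auto simp: index_adjoint_mult_kron_left sum_distrib_right simp del: index_mult_mat(1) intro!: sum.cong)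

lemma index_conj_kron_right:
  assumes "U \<in> carrier_mat (q * q) (q * q)" "r < q * q" "s < q * q"
  shows "(mat_adjoint U * kron_right q a * U) $$ (r, s) = (\<Sum>k<q. \<Sum>\<alpha>'<q. \<Sum>\<alpha><q.
    cnj (U $$ (k * q + \<alpha>, r)) * a $$ (\<alpha>, \<alpha>') * U $$ (k * q + \<alpha>', s))"
  using assms kron_right_carrier[of q a]
  by (subst index_mult_mat_pair_split[of _ q])
    (auto simp: index_adjoint_mult_kron_right sum_distrib_right simp del: index_mult_mat(1) intro!: sum.cong)

lemma ptrans_rows_orthonormal:
  assumes "ptrans q U * mat_adjoint (ptrans q U) = 1\<^sub>m (q * q)"
    and "k < q" "k' < q" "x < q" "y < q"
  shows "(\<Sum>i<q. \<Sum>\<alpha><q. cnj (U $$ (k * q + \<alpha>, i * q + x)) * U $$ (k' * q + \<alpha>, i * q + y))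
    = (if k = k' \<and> x = y then 1 else 0)"
proof -
  have "(\<Sum>i<q. \<Sum>\<alpha><q. cnj (U $$ (k * q + \<alpha>, i * q + x)) * U $$ (k' * q + \<alpha>, i * q + y))
      = (ptrans q U * mat_adjoint (ptrans q U)) $$ (k' * q + y, k * q + x)"
    using assms(2-5) ptrans_carrier[of q U]
    by (subst index_mult_adjoint_pair_split[of _ q]) (auto simp: ptrans_index mult.commute)
  then show ?thesis
    using assms by auto
qed

lemma ptrans_columns_orthonormal:
  assumes "mat_adjoint (ptrans q U) * ptrans q U = 1\<^sub>m (q * q)"
    and "i < q" "j < q" "\<alpha> < q" "\<alpha>' < q"
  shows "(\<Sum>k<q. \<Sum>x<q. cnj (U $$ (k * q + \<alpha>, i * q + x)) * U $$ (k * q + \<alpha>', j * q + x))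
    = (if i = j \<and> \<alpha> = \<alpha>' then 1 else 0)"
proof -
  have "(\<Sum>k<q. \<Sum>x<q. cnj (U $$ (k * q + \<alpha>, i * q + x)) * U $$ (k * q + \<alpha>', j * q + x))
      = (mat_adjoint (ptrans q U) * ptrans q U) $$ (i * q + \<alpha>, j * q + \<alpha>')"
    using assms(2-5) ptrans_carrier[of q U]
    by (subst index_adjoint_mult_pair_split[of _ q]) (auto simp: ptrans_index)
  then show ?thesis
    using assms by auto
qed

lemma ptrace1_conj_kron_left:
  assumes "U \<in> carrier_mat (q * q) (q * q)" "a \<in> carrier_mat q q"
    and ptrans_unitary: "ptrans q U * mat_adjoint (ptrans q U) = 1\<^sub>m (q * q)"
  shows "ptrace1 q (mat_adjoint U * kron_left q a * U) = mtrace a \<cdot>\<^sub>m 1\<^sub>m q"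
proof (rule eq_matI)
  fix x y
  assume "x < dim_row (mtrace a \<cdot>\<^sub>m 1\<^sub>m q)" "y < dim_col (mtrace a \<cdot>\<^sub>m 1\<^sub>m q)"
  then have xy: "x < q" "y < q"
    by auto
  let ?X = "mat_adjoint U * kron_left q a * U"
  have "ptrace1 q ?X $$ (x, y) = (\<Sum>i<q. ?X $$ (i * q + x, i * q + y))"
    using xy by (simp add: ptrace1_def)
  also have "\<dots> = (\<Sum>i<q. \<Sum>k'<q. \<Sum>\<alpha><q. \<Sum>k<q.
      cnj (U $$ (k * q + \<alpha>, i * q + x)) * a $$ (k, k') * U $$ (k' * q + \<alpha>, i * q + y))"
    using assms(1) xy by (intro sum.cong refl index_conj_kron_left) auto
  also have "\<dots> = (\<Sum>k'<q. \<Sum>\<alpha><q. \<Sum>k<q. \<Sum>i<q.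
      cnj (U $$ (k * q + \<alpha>, i * q + x)) * a $$ (k, k') * U $$ (k' * q + \<alpha>, i * q + y))"
    by (rule sum_swap_inward3)
  also have "\<dots> = (\<Sum>k'<q. \<Sum>k<q. \<Sum>i<q. \<Sum>\<alpha><q.
      cnj (U $$ (k * q + \<alpha>, i * q + x)) * a $$ (k, k') * U $$ (k' * q + \<alpha>, i * q + y))"
    by (rule sum.cong [OF refl], rule sum_swap_inward2)
  also have "\<dots> = (\<Sum>k'<q. \<Sum>k<q. a $$ (k, k') * (\<Sum>i<q. \<Sum>\<alpha><q.
      cnj (U $$ (k * q + \<alpha>, i * q + x)) * U $$ (k' * q + \<alpha>, i * q + y)))"
    by (simp add: sum_distrib_left mult_ac)
  also have "\<dots> = (\<Sum>k'<q. \<Sum>k<q. a $$ (k, k') * (if k = k' \<and> x = y then 1 else 0))"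
    using xy ptrans_unitary by (intro sum.cong refl) (simp add: ptrans_rows_orthonormal)
  also have "\<dots> = (mtrace a \<cdot>\<^sub>m 1\<^sub>m q) $$ (x, y)"
    using assms(2) xy by (simp add: mtrace_def if_distrib sum.If_cases)
  finally show "ptrace1 q ?X $$ (x, y) = (mtrace a \<cdot>\<^sub>m 1\<^sub>m q) $$ (x, y)" .
qed (simp_all add: ptrace1_def)

lemma ptrace2_conj_kron_right:
  assumes "U \<in> carrier_mat (q * q) (q * q)" "a \<in> carrier_mat q q"
    and ptrans_unitary: "mat_adjoint (ptrans q U) * ptrans q U = 1\<^sub>m (q * q)"
  shows "ptrace2 q (mat_adjoint U * kron_right q a * U) = mtrace a \<cdot>\<^sub>m 1\<^sub>m q"
proof (rule eq_matI)
  fix i j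
  assume "i < dim_row (mtrace a \<cdot>\<^sub>m 1\<^sub>m q)" "j < dim_col (mtrace a \<cdot>\<^sub>m 1\<^sub>m q)"
  then have ij: "i < q" "j < q"
    by auto
  let ?X = "mat_adjoint U * kron_right q a * U"
  have "ptrace2 q ?X $$ (i, j) = (\<Sum>x<q. ?X $$ (i * q + x, j * q + x))"
    using ij by (simp add: ptrace2_def)
  also have "\<dots> = (\<Sum>x<q. \<Sum>k<q. \<Sum>\<alpha>'<q. \<Sum>\<alpha><q.
      cnj (U $$ (k * q + \<alpha>, i * q + x)) * a $$ (\<alpha>, \<alpha>') * U $$ (k * q + \<alpha>', j * q + x))"
    using assms(1) ij by (intro sum.cong refl index_conj_kron_right) auto
  also have "\<dots> = (\<Sum>k<q. \<Sum>\<alpha>'<q. \<Sum>\<alpha><q. \<Sum>x<q.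
      cnj (U $$ (k * q + \<alpha>, i * q + x)) * a $$ (\<alpha>, \<alpha>') * U $$ (k * q + \<alpha>', j * q + x))"
    by (rule sum_swap_inward3)
  also have "\<dots> = (\<Sum>\<alpha>'<q. \<Sum>\<alpha><q. \<Sum>k<q. \<Sum>x<q.
      cnj (U $$ (k * q + \<alpha>, i * q + x)) * a $$ (\<alpha>, \<alpha>') * U $$ (k * q + \<alpha>', j * q + x))"
    by (rule sum_swap_inward2)
  also have "\<dots> = (\<Sum>\<alpha>'<q. \<Sum>\<alpha><q. a $$ (\<alpha>, \<alpha>') * (\<Sum>k<q. \<Sum>x<q.
      cnj (U $$ (k * q + \<alpha>, i * q + x)) * U $$ (k * q + \<alpha>', j * q + x)))"
    by (simp add: sum_distrib_left mult_ac)
  also have "\<dots> = (\<Sum>\<alpha>'<q. \<Sum>\<alpha><q. a $$ (\<alpha>, \<alpha>') * (if i = j \<and> \<alpha> = \<alpha>' then 1 else 0))"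
    using ij ptrans_unitary by (intro sum.cong refl) (simp add: ptrans_columns_orthonormal)
  also have "\<dots> = (mtrace a \<cdot>\<^sub>m 1\<^sub>m q) $$ (i, j)"
    using assms(2) ij by (simp add: mtrace_def if_distrib sum.If_cases)
  finally show "ptrace2 q ?X $$ (i, j) = (mtrace a \<cdot>\<^sub>m 1\<^sub>m q) $$ (i, j)" .
qed (simp_all add: ptrace2_def)

lemma nontrivial_eigenvalue_eq_0:
  assumes traceless_kernel: "\<And>a. a \<in> carrier_mat q q \<Longrightarrow> mtrace a = 0 \<Longrightarrow> M a = 0\<^sub>m q q"
    and "nontrivial_eigenvalue q M l"
  shows "l = 0"
proof -
  obtain a where a: "a \<in> carrier_mat q q" "a \<noteq> 0\<^sub>m q q" "mtrace a = 0" "M a = l \<cdot>\<^sub>m a"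
    using assms(2) unfolding nontrivial_eigenvalue_def by blast
  have "\<exists>i<q. \<exists>j<q. a $$ (i, j) \<noteq> 0"
  proof (rule ccontr)
    assume "\<not> ?thesis"
    with a(1) have "a = 0\<^sub>m q q"
      by (intro eq_matI) auto
    with a(2) show False ..
  qed
  then obtain i j where ij: "i < q" "j < q" "a $$ (i, j) \<noteq> 0"
    by blast
  have "l * a $$ (i, j) = M a $$ (i, j)"
    using a(1,4) ij by simp
  also have "\<dots> = 0"
    using traceless_kernel[OF a(1,3)] ij by simp
  finally show ?thesis
    using ij(3) by simp
qed

lemma two_unitary_Mplus_nontrivial_eigenvalue:
  assumes "two_unitary q U" "nontrivial_eigenvalue q (Mplus q U) l"
  shows "l = 0"
proof (rule nontrivial_eigenvalue_eq_0[OF _ assms(2)])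
  fix a :: "complex mat"
  assume "a \<in> carrier_mat q q" "mtrace a = 0"
  moreover have "U \<in> carrier_mat (q * q) (q * q)" "ptrans q U * mat_adjoint (ptrans q U) = 1\<^sub>m (q * q)"
    using assms(1) unfolding two_unitary_def unitary_mat_def by auto
  ultimately show "Mplus q U a = 0\<^sub>m q q"
    unfolding Mplus_def by (auto simp: ptrace1_conj_kron_left intro!: eq_matI)
qed

lemma two_unitary_Mminus_nontrivial_eigenvalue:
  assumes "two_unitary q U" "nontrivial_eigenvalue q (Mminus q U) l"
  shows "l = 0"
proof (rule nontrivial_eigenvalue_eq_0[OF _ assms(2)])
  fix a :: "complex mat"
  assume "a \<in> carrier_mat q q" "mtrace a = 0"
  moreover have "U \<in> carrier_mat (q * q) (q * q)" "mat_adjoint (ptrans q U) * ptrans q U = 1\<^sub>m (q * q)"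
    using assms(1) unfolding two_unitary_def unitary_mat_def by auto
  ultimately show "Mminus q U a = 0\<^sub>m q q"
    unfolding Mminus_def by (auto simp: ptrace2_conj_kron_right intro!: eq_matI)
qed

lemma ep_UC:
  assumes "q \<ge> 2"
  shows "ep q (UC q) = (if odd q then 1 else (of_nat q ^ 2 - 2) / (of_nat q ^ 2 - 1))"
proof -
  define Q where "Q = (of_nat q :: complex) ^ 2"
  define c :: complex where "c = (if odd q then 1 else 2)"
  have "q > 0"
    using assms by simp
  have "Q \<noteq> 1"
  proof
    assume "Q = 1"
    then have "q ^ 2 = 1"
      unfolding Q_def by (metis of_nat_eq_1_iff of_nat_power)
    with assms show False
      by simp
  qed
  moreover have "Q \<noteq> 0"
    using \<open>q > 0\<close> by (simp add: Q_def)
  ultimately have "((1 - 1 / Q) + (1 - c / Q) - (1 - 1 / Q)) / (1 - 1 / Q) = (Q - c) / (Q - 1)"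
    by (simp add: field_simps)
  moreover have "ep q (UC q) = ((1 - 1 / Q) + (1 - c / Q) - (1 - 1 / Q)) / (1 - 1 / Q)"
    unfolding ep_def ent_power_swap_def Q_def c_def
      ent_power_unitary_realign[OF unitary_realign_UC[OF \<open>q > 0\<close>]] ent_power_UC_swap[OF \<open>q > 0\<close>] ..
  ultimately show ?thesis
    using \<open>Q \<noteq> 1\<close> by (simp add: Q_def c_def)
qed

theorem mainTheorem7:
  fixes q :: nat
  assumes "q \<ge> 2"
  shows "unitary_mat (q*q) (UC q) \<and> dual_unitary q (UC q)
    \<and> (odd q \<longrightarrow> two_unitary q (UC q) \<and> ep q (UC q) = 1
          \<and> (\<forall>l. nontrivial_eigenvalue q (Mplus q (UC q)) l \<longrightarrow> l = 0)
          \<and> (\<forall>l. nontrivial_eigenvalue q (Mminus q (UC q)) l \<longrightarrow> l = 0))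
    \<and> (even q \<longrightarrow> \<not> two_unitary q (UC q)
          \<and> ep q (UC q) = (of_nat q ^ 2 - 2) / (of_nat q ^ 2 - 1))"
proof -
  have "q > 0"
    using assms by simp
  have unitary: "unitary_mat (q * q) (UC q)"
    using \<open>q > 0\<close> by (rule unitary_UC)
  have realign_unitary: "unitary_mat (q * q) (realign q (UC q))"
    using \<open>q > 0\<close> by (rule unitary_realign_UC)
  have odd_case: "two_unitary q (UC q) \<and> ep q (UC q) = 1
      \<and> (\<forall>l. nontrivial_eigenvalue q (Mplus q (UC q)) l \<longrightarrow> l = 0)
      \<and> (\<forall>l. nontrivial_eigenvalue q (Mminus q (UC q)) l \<longrightarrow> l = 0)" if "odd q"
  proof -
    have "two_unitary q (UC q)"
      unfolding two_unitary_def using unitary realign_unitary unitary_ptrans_UC[OF that] by blast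
    moreover have "ep q (UC q) = 1"
      using that by (simp add: ep_UC[OF assms])
    ultimately show ?thesis
      using two_unitary_Mplus_nontrivial_eigenvalue two_unitary_Mminus_nontrivial_eigenvalue by blast
  qed
  have even_case: "\<not> two_unitary q (UC q) \<and> ep q (UC q) = (of_nat q ^ 2 - 2) / (of_nat q ^ 2 - 1)"
    if "even q"
    using not_unitary_ptrans_UC[OF that \<open>q > 0\<close>] that ep_UC[OF assms]
    unfolding two_unitary_def unitary_mat_def by simp
  show ?thesis
    using unitary realign_unitary odd_case even_case unfolding dual_unitary_def by blast
qed

end
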